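(* Let $a>0$. The polynomial equation $27x^3(a-x)-(3a-x)^3=0$ in the real unknown $x$ has a positive real root if and only if $a\le a_0$ or $a\ge a_c$, where $a_0=\frac{2}{27}\,(26+15\sqrt3)^{-1}$ and $a_c=\frac{2(26+15\sqrt3)}{27}$. *)

theory Defs
  imports Complex_Main
begin

end

theory Submission
  imports Defs
begin

(* For r = sqrt 3 and r = -sqrt 3, nine times a (27 x^3 (a - x) - (3a - x)^3) equals
   9 (27 a - 2 (26 + 15 r)) x^3 (a - x) minus (3a - (2 + r) x)^2 times a positive
   semidefinite quadratic form.  At a positive root x the first term is therefore
   nonnegative: for x < a this gives a >= a_c (take r = sqrt 3), for x > a it gives
   a <= a_0 (take r = -sqrt 3).  Conversely, at x = 3a / (2 + r) the square vanishes, so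
   the quartic is nonnegative there when a is in the stated range; it is negative at
   x = 3a, and the intermediate value theorem produces a positive root. *)

definition quartic :: "real \<Rightarrow> real \<Rightarrow> real" where
  "quartic a x = 27 * x^3 * (a - x) - (3 * a - x)^3"

lemma abs_less_if_square_eq_3:
  fixes r :: real
  assumes "r^2 = 3"
  shows "\<bar>r\<bar> < 7/4"
proof -
  have "\<bar>r\<bar>^2 < (7/4)^2" using assms by (simp add: power2_eq_square)
  then show ?thesis by (rule power2_less_imp_less) simp
qed

lemma quadratic_form_nonneg:
  fixes r a x :: real
  assumes "r^2 = 3"
  shows "0 \<le> 27*a^2 + (9 + 18*r)*a*x + (36 + 18*r)*x^2"
proof -
  have "108 * (27*a^2 + (9 + 18*r)*a*x + (36 + 18*r)*x^2)
      = (54*a + (9 + 18*r)*x)^2 + (2835 + 1620*r)*x^2"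
    using assms by (simp add: power2_eq_square algebra_simps)
  moreover have "0 \<le> 2835 + 1620*r"
    using abs_less_if_square_eq_3[OF assms] by simp
  ultimately show ?thesis
    by (smt (verit) mult_nonneg_nonneg zero_le_power2)
qed

lemma quartic_decomposition:
  fixes r a x :: real
  assumes "r^2 = 3"
  shows "9 * (a * quartic a x) = 9 * ((27*a - 2*(26 + 15*r)) * x^3 * (a - x))
           - (3*a - (2 + r)*x)^2 * (27*a^2 + (9 + 18*r)*a*x + (36 + 18*r)*x^2)"
proof -
  have "9 * (a * quartic a x) - 9 * ((27*a - 2*(26 + 15*r)) * x^3 * (a - x))
           + (3*a - (2 + r)*x)^2 * (27*a^2 + (9 + 18*r)*a*x + (36 + 18*r)*x^2)
      = (r^2 - 3) * (18*a*x^3*r + 18*x^4*r - 81*a^2*x^2 - 27*a*x^3 + 108*x^4)"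
    by (simp add: quartic_def algebra_simps power2_eq_square power3_eq_cube power4_eq_xxxx)
  then show ?thesis using assms by simp
qed

lemma quartic_le:
  fixes r a x :: real
  assumes "r^2 = 3"
  shows "a * quartic a x \<le> (27*a - 2*(26 + 15*r)) * x^3 * (a - x)"
proof -
  have "0 \<le> (3*a - (2 + r)*x)^2 * (27*a^2 + (9 + 18*r)*a*x + (36 + 18*r)*x^2)"
    using quadratic_form_nonneg[OF assms] by simp
  then show ?thesis
    using quartic_decomposition[OF assms, of a x] by linarith
qed

lemma quartic_eq_if_double_root:
  fixes r a x :: real
  assumes "r^2 = 3" and "(2 + r) * x = 3 * a"
  shows "a * quartic a x = (27*a - 2*(26 + 15*r)) * x^3 * (a - x)"
proof -
  have "3*a - (2 + r)*x = 0" using assms(2) by simp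
  then show ?thesis
    using quartic_decomposition[OF assms(1), of a x] by simp
qed

lemma quartic_root_sign:
  fixes r a x :: real
  assumes "r^2 = 3" and "a > 0" and "x > 0" and "quartic a x = 0"
  shows "0 \<le> (27*a - 2*(26 + 15*r)) * (a - x)"
proof -
  have "0 \<le> x^3 * ((27*a - 2*(26 + 15*r)) * (a - x))"
    using quartic_le[OF assms(1), of a x] assms(4) by (simp add: algebra_simps)
  then show ?thesis using assms(3) by (simp add: zero_le_mult_iff)
qed

lemma quartic_has_root_if_nonneg:
  fixes a x :: real
  assumes "a > 0" and "x > 0" and "quartic a x \<ge> 0"
  shows "\<exists>y > 0. quartic a y = 0"
proof -
  have cont: "continuous_on {u..v} (quartic a)" for u v
    unfolding quartic_def by (intro continuous_intros)
  have neg: "quartic a (3 * a) \<le> 0"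
    using assms(1) by (simp add: quartic_def)
  consider "x \<le> 3 * a" | "3 * a \<le> x" by linarith
  then obtain y where "min x (3 * a) \<le> y" and "quartic a y = 0"
  proof cases
    case 1
    then show ?thesis
      using IVT2'[of "quartic a" "3 * a" 0 x] cont assms(3) neg that by fastforce
  next
    case 2
    then show ?thesis
      using IVT'[of "quartic a" "3 * a" 0 x] cont assms(3) neg that by fastforce
  qed
  then show ?thesis using assms(1,2) by (intro exI[of _ y]) auto
qed

lemma quartic_has_root_if_sign:
  fixes r a :: real
  assumes "r^2 = 3" and "a > 0"
    and "0 \<le> (27*a - 2*(26 + 15*r)) * (a - 3 * a / (2 + r))"
  shows "\<exists>x > 0. quartic a x = 0"
proof -
  define x where "x = 3 * a / (2 + r)"
  have "2 + r > 0" using abs_less_if_square_eq_3[OF assms(1)] by simp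
  then have x_pos: "x > 0" and double_root: "(2 + r) * x = 3 * a"
    using assms(2) by (simp_all add: x_def)
  have "0 \<le> x^3 * ((27*a - 2*(26 + 15*r)) * (a - x))"
    using assms(3) x_pos unfolding x_def by simp
  then have "0 \<le> a * quartic a x"
    using quartic_eq_if_double_root[OF assms(1) double_root] by (simp add: algebra_simps)
  then have "quartic a x \<ge> 0" using assms(2) by (simp add: zero_le_mult_iff)
  then show ?thesis using quartic_has_root_if_nonneg assms(2) x_pos by blast
qed

lemma inverse_26_plus_15_sqrt3: "inverse (26 + 15 * sqrt 3) = 26 - 15 * sqrt (3::real)"
  by (rule inverse_unique) (simp add: algebra_simps power2_eq_square)

theorem mainTheorem5:
  fixes a :: real
  assumes "a > 0"
  shows "(\<exists>x::real. x > 0 \<and> 27 * x^3 * (a - x) - (3 * a - x)^3 = 0) \<longleftrightarrow>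
         (a \<le> 2 / 27 * inverse (26 + 15 * sqrt 3) \<or> a \<ge> 2 * (26 + 15 * sqrt 3) / 27)"
proof -
  define r where "r = sqrt (3::real)"
  have r_sq: "r^2 = 3" "(-r)^2 = 3" and r_bounds: "1 < r" "r < 2"
    by (simp_all add: r_def real_less_rsqrt real_less_lsqrt)
  have a0: "2 / 27 * inverse (26 + 15 * sqrt 3) = 2 * (26 + 15 * (-r)) / 27"
    by (simp add: inverse_26_plus_15_sqrt3 r_def)
  have "(\<exists>x > 0. quartic a x = 0) \<longleftrightarrow>
        (27 * a \<le> 2 * (26 + 15 * (-r)) \<or> 2 * (26 + 15 * r) \<le> 27 * a)"
  proof
    assume "\<exists>x > 0. quartic a x = 0"
    then obtain x where x: "x > 0" "quartic a x = 0" by blast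
    have "x \<noteq> a" using x assms by (auto simp: quartic_def)
    then show "27 * a \<le> 2 * (26 + 15 * (-r)) \<or> 2 * (26 + 15 * r) \<le> 27 * a"
      using quartic_root_sign[OF r_sq(1) assms x] quartic_root_sign[OF r_sq(2) assms x]
      by (auto simp: zero_le_mult_iff)
  next
    have "3 * a / (2 + r) < a" "a < 3 * a / (2 + (-r))"
      using r_bounds assms by (simp_all add: field_simps add_pos_pos)
    moreover assume "27 * a \<le> 2 * (26 + 15 * (-r)) \<or> 2 * (26 + 15 * r) \<le> 27 * a"
    ultimately show "\<exists>x > 0. quartic a x = 0"
      using quartic_has_root_if_sign[OF r_sq(1) assms] quartic_has_root_if_sign[OF r_sq(2) assms]
      by (auto simp: mult_nonpos_nonpos)
  qed
  then show ?thesis unfolding a0 quartic_def r_def by auto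
qed

end
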